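(* Let $d\geq1$ and let $0<\alpha,\gamma<\frac d2$ and $0<\beta<d$ satisfy $\frac d2<\alpha+\beta<d$ and $\alpha+\beta+\gamma>d$. Then the integral operator on $\mathbb R^d$ with kernel $k(x,y)=\langle x\rangle^{-\alpha}|x-y|^{-\beta}\langle y\rangle^{-\gamma}$ is bounded on $L^2(\mathbb R^d)$.
   Context: $\langle x\rangle=(1+|x|^2)^{1/2}$. *)

theory Defs
  imports "HOL-Analysis.Analysis"
begin

definition jbr :: "'a::euclidean_space \<Rightarrow> real" where
  "jbr x = sqrt (1 + (norm x)\<^sup>2)"

definition L2 :: "('a::euclidean_space \<Rightarrow> real) \<Rightarrow> bool" where
  "L2 f \<longleftrightarrow> f \<in> borel_measurable lborel \<and> integrable lborel (\<lambda>x. (f x)\<^sup>2)"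

definition L2_norm :: "('a::euclidean_space \<Rightarrow> real) \<Rightarrow> real" where
  "L2_norm f = sqrt (\<integral>x. (f x)\<^sup>2 \<partial>lborel)"

definition int_op :: "('a::euclidean_space \<Rightarrow> 'a \<Rightarrow> real) \<Rightarrow> ('a \<Rightarrow> real) \<Rightarrow> 'a \<Rightarrow> real" where
  "int_op k f x = (\<integral>y. k x y * f y \<partial>lborel)"

definition bounded_on_L2 :: "('a::euclidean_space \<Rightarrow> 'a \<Rightarrow> real) \<Rightarrow> bool" where
  "bounded_on_L2 k \<longleftrightarrow> (\<exists>C. \<forall>f. L2 f \<longrightarrow>
      (AE x in lborel. integrable lborel (\<lambda>y. k x y * f y)) \<and>
      L2 (int_op k f) \<and> L2_norm (int_op k f) \<le> C * L2_norm f)"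

end

theory Submission
  imports Defs
begin

text \<open>
  The operator is bounded by Schur's test with the weight \<open>w(x) = \<langle>x\<rangle>^(-d/2)\<close>: it suffices that
  \<open>\<integral> k(x,y) w(y) dy \<lesssim> w(x)\<close> and symmetrically in \<open>x\<close>. Both reduce to the convolution estimate
  \<open>\<integral> |x - y|^(-\<beta>) \<langle>y\<rangle>^(-\<mu>) dy \<lesssim> \<langle>x\<rangle>^(d - \<beta> - \<mu>)\<close> for \<open>\<beta>, \<mu> < d < \<beta> + \<mu>\<close> (here
  \<open>\<mu> = \<gamma> + d/2\<close>, resp. \<open>\<alpha> + d/2\<close>), since then \<open>\<langle>x\<rangle>^(-\<alpha>) \<langle>x\<rangle>^(d/2 - \<beta> - \<gamma>) \<le> \<langle>x\<rangle>^(-d/2)\<close>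
  by \<open>\<alpha> + \<beta> + \<gamma> \<ge> d\<close>. For the convolution estimate, with \<open>R = \<langle>x\<rangle>\<close>, split \<open>y\<close> into the
  regions \<open>|x - y| \<le> R/2\<close> (where \<open>\<langle>y\<rangle> \<ge> R/2\<close>), \<open>|y| \<le> R\<close>, and \<open>|y| > R\<close> (where
  \<open>|x - y| \<ge> \<langle>y\<rangle>/3\<close>); each piece is an integral of \<open>|z|^(-s)\<close> over a ball or the outside of a
  ball, which by homogeneity scales like \<open>r^(d - s)\<close>. Finiteness at radius 1 follows from
  self-similarity under \<open>z \<mapsto> 2z\<close>: a truncated integral \<open>I\<close> satisfies \<open>I \<le> 2^(s - d) I + J\<close>.
\<close>

lemma nn_integral_lborel_affine:
  fixes f :: "'a::euclidean_space \<Rightarrow> ennreal" and c :: real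
  assumes [measurable]: "f \<in> borel_measurable borel" and "c \<noteq> 0"
  shows "(\<integral>\<^sup>+x. f x \<partial>lborel) = ennreal (\<bar>c\<bar> ^ DIM('a)) * (\<integral>\<^sup>+x. f (t + c *\<^sub>R x) \<partial>lborel)"
  using assms by (subst lborel_affine[of c t])
    (simp_all add: nn_integral_density nn_integral_distr nn_integral_cmult)

lemma cball_borel [measurable]: "cball x r \<in> sets borel"
  by (simp add: borel_closed)

definition norm_powr_measure :: "real \<Rightarrow> 'a::euclidean_space measure" where
  "norm_powr_measure s = density lborel (\<lambda>z. ennreal (norm z powr -s))"

lemma sets_norm_powr_measure [simp, measurable_cong]: "sets (norm_powr_measure s) = sets borel"
  by (simp add: norm_powr_measure_def)

lemma emeasure_norm_powr_measure:
  "A \<in> sets borel \<Longrightarrow>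
    emeasure (norm_powr_measure s) A = (\<integral>\<^sup>+z. ennreal (norm z powr -s) * indicator A z \<partial>lborel)"
  by (simp add: norm_powr_measure_def emeasure_density)

lemma emeasure_norm_powr_measure_scale:
  fixes c s :: real and T :: "real set"
  assumes c: "0 < c" and [measurable]: "T \<in> sets borel"
  shows "emeasure (norm_powr_measure s) {z::'a::euclidean_space. norm z / c \<in> T}
       = ennreal (c powr (DIM('a) - s)) * emeasure (norm_powr_measure s) {z::'a. norm z \<in> T}"
proof -
  have [measurable]: "{z::'a. norm z / c \<in> T} \<in> sets borel" "{z::'a. norm z \<in> T} \<in> sets borel"
    by measurable
  have "emeasure (norm_powr_measure s) {z::'a. norm z / c \<in> T}
      = ennreal (c ^ DIM('a)) * (\<integral>\<^sup>+x. ennreal (norm (c *\<^sub>R x) powr -s) * indicator {z::'a. norm z / c \<in> T} (c *\<^sub>R x) \<partial>lborel)"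
    using c by (simp add: emeasure_norm_powr_measure, subst nn_integral_lborel_affine[where t=0 and c=c]) auto
  also have "\<dots> = ennreal (c ^ DIM('a)) * (\<integral>\<^sup>+x. ennreal (c powr -s) * (ennreal (norm x powr -s) * indicator {z::'a. norm z \<in> T} x) \<partial>lborel)"
    using c by (intro arg_cong[where f="(*) (ennreal (c ^ DIM('a)))"] nn_integral_cong)
      (simp add: indicator_def powr_mult ennreal_mult)
  also have "\<dots> = ennreal (c powr (DIM('a) - s)) * emeasure (norm_powr_measure s) {z::'a. norm z \<in> T}"
  proof -
    have "c powr (DIM('a) - s) = c ^ DIM('a) * c powr -s"
      using c by (simp add: powr_diff powr_realpow powr_minus divide_inverse)
    then have "ennreal (c powr (DIM('a) - s)) = ennreal (c ^ DIM('a)) * ennreal (c powr -s)"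
      using c by (simp add: ennreal_mult)
    then show ?thesis
      by (subst nn_integral_cmult) (simp_all add: emeasure_norm_powr_measure mult.assoc)
  qed
  finally show ?thesis .
qed

lemma ennreal_le_divide_if_le_mult_add:
  fixes I A :: ennreal and q :: real
  assumes "I \<le> ennreal q * I + A" "I \<noteq> \<infinity>" "A \<noteq> \<infinity>" "0 \<le> q" "q < 1"
  shows "I \<le> A / ennreal (1 - q)"
proof -
  obtain i where i: "I = ennreal i" "0 \<le> i" using assms(2) by (cases I) auto
  obtain a where a: "A = ennreal a" "0 \<le> a" using assms(3) by (cases A) auto
  have "i \<le> q * i + a" using assms(1,4) i a
    by (simp add: ennreal_mult[symmetric] ennreal_plus[symmetric] del: ennreal_plus)
  then have "i \<le> a / (1 - q)" using assms(5) by (simp add: field_simps)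
  then show ?thesis using i a assms(5) by (simp add: divide_ennreal)
qed

lemma emeasure_norm_powr_measure_annulus_finite:
  fixes s a b :: real
  assumes "0 \<le> s" "0 < a"
  shows "emeasure (norm_powr_measure s) {z::'a::euclidean_space. norm z \<in> {a<..b}} < \<infinity>"
proof -
  have "emeasure (norm_powr_measure s) {z::'a. norm z \<in> {a<..b}}
      = (\<integral>\<^sup>+z. ennreal (norm z powr -s) * indicator {z::'a. norm z \<in> {a<..b}} z \<partial>lborel)"
    by (rule emeasure_norm_powr_measure) measurable
  also have "\<dots> \<le> (\<integral>\<^sup>+z. ennreal (a powr -s) * indicator (cball (0::'a) b) z \<partial>lborel)"
    using assms by (intro nn_integral_mono) (auto simp: indicator_def intro!: powr_mono2')
  also have "\<dots> < \<infinity>"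
    using emeasure_lborel_cball_finite[of "0::'a" b]
    by (subst nn_integral_cmult_indicator) (auto simp: ennreal_mult_less_top less_top)
  finally show ?thesis .
qed

lemma emeasure_norm_powr_measure_inner_annulus_le:
  fixes s e :: real
  assumes s: "0 \<le> s" "s < DIM('a)" and e: "0 < e"
  shows "emeasure (norm_powr_measure s) {z::'a::euclidean_space. norm z \<in> {e<..1}}
    \<le> emeasure (norm_powr_measure s) {z::'a. norm z \<in> {1/2<..1}} / ennreal (1 - 2 powr (s - DIM('a)))"
proof (rule ennreal_le_divide_if_le_mult_add)
  let ?\<mu> = "norm_powr_measure s :: 'a measure"
  let ?q = "(2::real) powr (s - DIM('a))"
  \<comment> \<open>self-similarity: the shell \<open>e < |z| \<le> 1/2\<close> is the shell \<open>2e < |z| \<le> 1\<close> shrunk by the factor 2\<close>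
  have "{z::'a. norm z \<in> {e<..1}} \<subseteq> {z. norm z / (1/2) \<in> {2 * e<..1}} \<union> {z. norm z \<in> {1/2<..1}}"
    by auto
  then have "emeasure ?\<mu> {z. norm z \<in> {e<..1}}
      \<le> emeasure ?\<mu> {z. norm z / (1/2) \<in> {2 * e<..1}} + emeasure ?\<mu> {z. norm z \<in> {1/2<..1}}"
    by (rule order_trans[OF emeasure_mono emeasure_subadditive]) simp_all
  also have "emeasure ?\<mu> {z. norm z / (1/2) \<in> {2 * e<..1}} = ennreal ?q * emeasure ?\<mu> {z. norm z \<in> {2 * e<..1}}"
  proof -
    have "(1/2::real) powr (DIM('a) - s) = ?q"
      by (simp add: powr_divide powr_minus_divide[symmetric])
    then show ?thesis
      by (subst emeasure_norm_powr_measure_scale) auto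
  qed
  also have "\<dots> \<le> ennreal ?q * emeasure ?\<mu> {z. norm z \<in> {e<..1}}"
    using e by (intro mult_left_mono emeasure_mono) auto
  finally show "emeasure ?\<mu> {z. norm z \<in> {e<..1}}
      \<le> ennreal ?q * emeasure ?\<mu> {z. norm z \<in> {e<..1}} + emeasure ?\<mu> {z. norm z \<in> {1/2<..1}}"
    by (simp add: add_right_mono)
  show "emeasure ?\<mu> {z. norm z \<in> {e<..1}} \<noteq> \<infinity>" "emeasure ?\<mu> {z. norm z \<in> {1/2<..1}} \<noteq> \<infinity>"
    using emeasure_norm_powr_measure_annulus_finite[OF s(1) e, of 1]
      emeasure_norm_powr_measure_annulus_finite[OF s(1), of "1/2" 1]
    by (simp_all add: less_top)
  show "0 \<le> ?q" "?q < 1"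
    using s by (simp_all add: powr_less_one)
qed

lemma emeasure_norm_powr_measure_cball_finite:
  fixes s :: real
  assumes s: "0 \<le> s" "s < DIM('a)"
  shows "emeasure (norm_powr_measure s) {z::'a::euclidean_space. norm z \<in> {..1}} < \<infinity>"
proof -
  let ?\<mu> = "norm_powr_measure s :: 'a measure"
  define A where "A n = {z::'a. norm z \<in> {1 / Suc n<..1}}" for n
  define J where "J = emeasure ?\<mu> {z. norm z \<in> {1/2<..1}}"
  have [measurable]: "A n \<in> sets borel" for n
    unfolding A_def by measurable
  have "{z::'a. norm z \<in> {..1}} \<subseteq> {0} \<union> (\<Union>n. A n)"
  proof
    fix z :: 'a
    assume z: "z \<in> {z. norm z \<in> {..1}}"
    show "z \<in> {0} \<union> (\<Union>n. A n)"
    proof (cases "z = 0")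
      case False
      then obtain n where "1 / real (Suc n) < norm z"
        using reals_Archimedean[of "norm z"] by (auto simp: field_simps)
      then show ?thesis
        using z by (auto simp: A_def)
    qed simp
  qed
  then have "emeasure ?\<mu> {z::'a. norm z \<in> {..1}} \<le> emeasure ?\<mu> {0} + emeasure ?\<mu> (\<Union>n. A n)"
    by (rule order_trans[OF emeasure_mono emeasure_subadditive]) simp_all
  also have "emeasure ?\<mu> {0} = 0"
    \<comment> \<open>the density vanishes at the origin, as \<open>0 powr -s = 0\<close>\<close>
    by (simp add: emeasure_norm_powr_measure)
  also have "emeasure ?\<mu> (\<Union>n. A n) = (SUP n. emeasure ?\<mu> (A n))"
  proof (rule SUP_emeasure_incseq[symmetric])
    show "incseq A"
    proof (rule incseq_SucI)
      fix n
      have "1 / real (Suc (Suc n)) \<le> 1 / real (Suc n)"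
        by (rule divide_left_mono) auto
      then show "A n \<subseteq> A (Suc n)"
        unfolding A_def by auto
    qed
  qed auto
  also have "\<dots> \<le> J / ennreal (1 - 2 powr (s - DIM('a)))"
    unfolding A_def J_def by (intro SUP_least emeasure_norm_powr_measure_inner_annulus_le s) simp
  also have "\<dots> < \<infinity>"
    using s emeasure_norm_powr_measure_annulus_finite[OF s(1), of "1/2" 1]
    by (auto simp: J_def divide_ennreal_def inverse_ennreal ennreal_mult_less_top powr_less_one)
  finally show ?thesis
    by simp
qed

lemma emeasure_norm_powr_measure_outer_annulus_le:
  fixes s R :: real
  assumes s: "DIM('a) < s"
  shows "emeasure (norm_powr_measure s) {z::'a::euclidean_space. norm z \<in> {1<..R}}
    \<le> emeasure (norm_powr_measure s) {z::'a. norm z \<in> {1<..2}} / ennreal (1 - 2 powr (DIM('a) - s))"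
proof (rule ennreal_le_divide_if_le_mult_add)
  let ?\<mu> = "norm_powr_measure s :: 'a measure"
  let ?q = "(2::real) powr (DIM('a) - s)"
  have s0: "0 \<le> s"
    using s by (metis DIM_positive less_trans of_nat_0_less_iff less_imp_le)
  have "{z::'a. norm z \<in> {1<..R}} \<subseteq> {z. norm z / 2 \<in> {1<..R / 2}} \<union> {z. norm z \<in> {1<..2}}"
    by auto
  then have "emeasure ?\<mu> {z. norm z \<in> {1<..R}}
      \<le> emeasure ?\<mu> {z. norm z / 2 \<in> {1<..R / 2}} + emeasure ?\<mu> {z. norm z \<in> {1<..2}}"
    by (rule order_trans[OF emeasure_mono emeasure_subadditive]) simp_all
  also have "emeasure ?\<mu> {z. norm z / 2 \<in> {1<..R / 2}} = ennreal ?q * emeasure ?\<mu> {z. norm z \<in> {1<..R / 2}}"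
    by (subst emeasure_norm_powr_measure_scale) auto
  also have "\<dots> \<le> ennreal ?q * emeasure ?\<mu> {z. norm z \<in> {1<..R}}"
    by (intro mult_left_mono emeasure_mono) auto
  finally show "emeasure ?\<mu> {z. norm z \<in> {1<..R}}
      \<le> ennreal ?q * emeasure ?\<mu> {z. norm z \<in> {1<..R}} + emeasure ?\<mu> {z. norm z \<in> {1<..2}}"
    by (simp add: add_right_mono)
  show "emeasure ?\<mu> {z. norm z \<in> {1<..R}} \<noteq> \<infinity>" "emeasure ?\<mu> {z. norm z \<in> {1<..2}} \<noteq> \<infinity>"
    using emeasure_norm_powr_measure_annulus_finite[OF s0, of 1 R]
      emeasure_norm_powr_measure_annulus_finite[OF s0, of 1 2]
    by (simp_all add: less_top)
  show "0 \<le> ?q" "?q < 1"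
    using s by (simp_all add: powr_less_one)
qed

lemma emeasure_norm_powr_measure_outside_cball_finite:
  fixes s :: real
  assumes s: "DIM('a) < s"
  shows "emeasure (norm_powr_measure s) {z::'a::euclidean_space. norm z \<in> {1<..}} < \<infinity>"
proof -
  let ?\<mu> = "norm_powr_measure s :: 'a measure"
  define B where "B n = {z::'a. norm z \<in> {1<..real n}}" for n
  have [measurable]: "B n \<in> sets borel" for n
    unfolding B_def by measurable
  have "{z::'a. norm z \<in> {1<..}} = (\<Union>n. B n)"
    by (auto simp: B_def intro: real_arch_simple)
  then have "emeasure ?\<mu> {z::'a. norm z \<in> {1<..}} = (SUP n. emeasure ?\<mu> (B n))"
    by (simp add: SUP_emeasure_incseq incseq_def B_def image_subset_iff subset_eq)
  also have "\<dots> \<le> emeasure ?\<mu> {z. norm z \<in> {1<..2}} / ennreal (1 - 2 powr (DIM('a) - s))"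
    unfolding B_def by (intro SUP_least emeasure_norm_powr_measure_outer_annulus_le s)
  also have "\<dots> < \<infinity>"
    using s emeasure_norm_powr_measure_annulus_finite[of s 1 2, where 'a='a]
    by (simp add: divide_ennreal_def inverse_ennreal ennreal_mult_less_top powr_less_one)
  finally show ?thesis .
qed

lemma emeasure_norm_powr_measure_dilation_le:
  fixes s :: real and T :: "real set"
  assumes [measurable]: "T \<in> sets borel"
    and fin: "emeasure (norm_powr_measure s) {z::'a::euclidean_space. norm z \<in> T} < \<infinity>"
  shows "\<exists>C\<ge>0. \<forall>r>0. emeasure (norm_powr_measure s) {z::'a. norm z / r \<in> T}
                    \<le> ennreal (C * r powr (DIM('a) - s))"
proof (intro exI conjI allI impI)
  let ?E = "emeasure (norm_powr_measure s) {z::'a. norm z \<in> T}"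
  fix r :: real assume "0 < r"
  then show "emeasure (norm_powr_measure s) {z::'a. norm z / r \<in> T} \<le> ennreal (enn2real ?E * r powr (DIM('a) - s))"
    using fin by (simp add: emeasure_norm_powr_measure_scale ennreal_mult ennreal_enn2real_if mult.commute)
qed simp

lemma emeasure_norm_powr_measure_cball_le:
  fixes s :: real
  assumes "0 \<le> s" "s < DIM('a)"
  shows "\<exists>C\<ge>0. \<forall>r>0. emeasure (norm_powr_measure s) (cball (0::'a::euclidean_space) r)
                    \<le> ennreal (C * r powr (DIM('a) - s))"
proof -
  have "cball 0 r = {z::'a. norm z / r \<in> {..1}}" if "0 < r" for r
    using that by (auto simp: divide_le_eq)
  then show ?thesis
    using emeasure_norm_powr_measure_dilation_le[OF _ emeasure_norm_powr_measure_cball_finite[OF assms]]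
    by simp
qed

lemma emeasure_norm_powr_measure_outside_cball_le:
  fixes s :: real
  assumes "DIM('a) < s"
  shows "\<exists>C\<ge>0. \<forall>r>0. emeasure (norm_powr_measure s) (- cball (0::'a::euclidean_space) r)
                    \<le> ennreal (C * r powr (DIM('a) - s))"
proof -
  have "- cball 0 r = {z::'a. norm z / r \<in> {1<..}}" if "0 < r" for r
    using that by (auto simp: less_divide_eq)
  then show ?thesis
    using emeasure_norm_powr_measure_dilation_le[OF _ emeasure_norm_powr_measure_outside_cball_finite[OF assms]]
    by simp
qed

lemma nn_integral_norm_powr_translate:
  fixes x :: "'a::euclidean_space" and s c :: real
  assumes [measurable]: "A \<in> sets borel" and c: "0 \<le> c"
  shows "(\<integral>\<^sup>+y. ennreal (c * (norm (y - x) powr -s * indicator A (y - x))) \<partial>lborel)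
       = ennreal c * emeasure (norm_powr_measure s) A"
proof -
  have "(\<integral>\<^sup>+y. ennreal (c * (norm (y - x) powr -s * indicator A (y - x))) \<partial>lborel)
      = (\<integral>\<^sup>+y. ennreal c * (ennreal (norm y powr -s) * indicator A y) \<partial>lborel)"
    by (subst nn_integral_lborel_affine[where t=x and c=1])
      (auto simp: c ennreal_mult indicator_def intro!: nn_integral_cong)
  also have "\<dots> = ennreal c * emeasure (norm_powr_measure s) A"
    by (simp add: nn_integral_cmult emeasure_norm_powr_measure)
  finally show ?thesis .
qed

lemma jbr_eq_norm_Pair: "jbr x = norm (1::real, x)"
  by (simp add: jbr_def norm_Pair)

lemma one_le_jbr: "1 \<le> jbr x"
  by (simp add: jbr_def)

lemma jbr_pos: "0 < jbr x"
  using one_le_jbr[of x] by simp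

lemma norm_le_jbr: "norm x \<le> jbr x"
  by (simp add: jbr_eq_norm_Pair norm_Pair real_le_rsqrt)

lemma jbr_le_add_norm_diff: "jbr x \<le> jbr y + norm (x - y)"
  using norm_triangle_sub[of "(1::real, x)" "(1::real, y)"]
  by (simp add: jbr_eq_norm_Pair norm_Pair)

lemma borel_measurable_jbr [measurable]: "jbr \<in> borel_measurable borel"
  unfolding jbr_def[abs_def] by measurable

lemma norm_diff_powr_mult_jbr_powr_le:
  fixes x y :: "'a::euclidean_space" and \<beta> \<mu> :: real
  assumes \<beta>: "0 < \<beta>" and \<mu>: "0 < \<mu>" and y: "y \<noteq> 0"
  defines "R \<equiv> jbr x"
  shows "norm (x - y) powr -\<beta> * jbr y powr -\<mu> \<le>
     (R/2) powr -\<mu> * (norm (y - x) powr -\<beta> * indicator (cball 0 (R/2)) (y - x))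
   + (R/2) powr -\<beta> * (norm y powr -\<mu> * indicator (cball 0 R) y)
   + 3 powr \<beta> * (norm y powr -(\<beta> + \<mu>) * indicator (- cball 0 R) y)"
    (is "_ \<le> ?near_x + ?near_0 + ?far")
proof -
  have R: "1 \<le> R" "R \<le> jbr y + norm (x - y)"
    unfolding R_def by (rule one_le_jbr, rule jbr_le_add_norm_diff)
  have y_le: "0 < norm y" "norm y \<le> jbr y"
    using y by (auto intro: norm_le_jbr)
  have nonneg: "0 \<le> ?near_x" "0 \<le> ?near_0" "0 \<le> ?far"
    by simp_all
  consider "norm (x - y) \<le> R/2" | "R/2 < norm (x - y)" "norm y \<le> R" | "R/2 < norm (x - y)" "R < norm y"
    by linarith
  then show ?thesis
  proof cases
    case 1
    then have "jbr y powr -\<mu> \<le> (R/2) powr -\<mu>"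
      using R \<mu> by (intro powr_mono2') auto
    then have "norm (x - y) powr -\<beta> * jbr y powr -\<mu> \<le> norm (x - y) powr -\<beta> * (R/2) powr -\<mu>"
      by (rule mult_left_mono) simp
    also have "\<dots> = ?near_x"
      using 1 by (simp add: norm_minus_commute)
    finally show ?thesis
      using nonneg by linarith
  next
    case 2
    have "norm (x - y) powr -\<beta> \<le> (R/2) powr -\<beta>" "jbr y powr -\<mu> \<le> norm y powr -\<mu>"
      using 2 R \<beta> \<mu> y_le by (auto intro!: powr_mono2')
    then have "norm (x - y) powr -\<beta> * jbr y powr -\<mu> \<le> ?near_0"
      using 2 by (simp add: mult_mono)
    then show ?thesis
      using nonneg by linarith
  next
    case 3
    \<comment> \<open>far from both points, \<open>|x - y|\<close> is comparable to \<open>\<langle>y\<rangle>\<close>\<close>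
    moreover have "jbr y \<le> R + norm (x - y)"
      unfolding R_def using jbr_le_add_norm_diff[of y x] by (simp add: norm_minus_commute)
    ultimately have "jbr y / 3 < norm (x - y)"
      by linarith
    then have "norm (x - y) powr -\<beta> \<le> (jbr y / 3) powr -\<beta>"
      using jbr_pos[of y] \<beta> by (intro powr_mono2') auto
    also have "\<dots> = 3 powr \<beta> * jbr y powr -\<beta>"
      using jbr_pos[of y] by (simp add: powr_divide powr_minus_divide)
    finally have "norm (x - y) powr -\<beta> * jbr y powr -\<mu> \<le> 3 powr \<beta> * jbr y powr -\<beta> * jbr y powr -\<mu>"
      by (rule mult_right_mono) simp
    also have "\<dots> = 3 powr \<beta> * jbr y powr -(\<beta> + \<mu>)"
      by (simp add: powr_add[symmetric] mult.assoc)
    also have "\<dots> \<le> ?far"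
      using 3 y_le \<beta> \<mu> by (simp add: powr_mono2')
    finally show ?thesis
      using nonneg by linarith
  qed
qed

lemma nn_integral_norm_diff_powr_jbr_powr_le_regions:
  fixes x :: "'a::euclidean_space" and \<beta> \<mu> :: real
  assumes \<beta>: "0 < \<beta>" and \<mu>: "0 < \<mu>"
  defines "R \<equiv> jbr x"
  shows "(\<integral>\<^sup>+y. ennreal (norm (x - y) powr -\<beta> * jbr y powr -\<mu>) \<partial>lborel)
    \<le> ennreal ((R/2) powr -\<mu>) * emeasure (norm_powr_measure \<beta>) (cball (0::'a) (R/2))
      + ennreal ((R/2) powr -\<beta>) * emeasure (norm_powr_measure \<mu>) (cball (0::'a) R)
      + ennreal (3 powr \<beta>) * emeasure (norm_powr_measure (\<beta> + \<mu>)) (- cball (0::'a) R)"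
proof -
  define T\<^sub>1 where "T\<^sub>1 y = (R/2) powr -\<mu> * (norm (y - x) powr -\<beta> * indicator (cball 0 (R/2)) (y - x))" for y
  define T\<^sub>2 where "T\<^sub>2 y = (R/2) powr -\<beta> * (norm y powr -\<mu> * indicator (cball 0 R) y)" for y :: 'a
  define T\<^sub>3 where "T\<^sub>3 y = 3 powr \<beta> * (norm y powr -(\<beta> + \<mu>) * indicator (- cball 0 R) y)" for y :: 'a
  have [measurable]: "T\<^sub>1 \<in> borel_measurable borel" "T\<^sub>2 \<in> borel_measurable borel" "T\<^sub>3 \<in> borel_measurable borel"
    unfolding T\<^sub>1_def[abs_def] T\<^sub>2_def[abs_def] T\<^sub>3_def[abs_def] by measurable
  have "(\<integral>\<^sup>+y. ennreal (norm (x - y) powr -\<beta> * jbr y powr -\<mu>) \<partial>lborel)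
      \<le> (\<integral>\<^sup>+y. ennreal (T\<^sub>1 y) + ennreal (T\<^sub>2 y) + ennreal (T\<^sub>3 y) \<partial>lborel)"
    using AE_lborel_singleton[of "0::'a"]
  proof (intro nn_integral_mono_AE, eventually_elim)
    case (elim y)
    have "norm (x - y) powr -\<beta> * jbr y powr -\<mu> \<le> T\<^sub>1 y + T\<^sub>2 y + T\<^sub>3 y"
      unfolding T\<^sub>1_def T\<^sub>2_def T\<^sub>3_def R_def
      by (rule norm_diff_powr_mult_jbr_powr_le[OF \<beta> \<mu> \<open>y \<noteq> 0\<close>])
    then show ?case
      by (simp add: T\<^sub>1_def T\<^sub>2_def T\<^sub>3_def ennreal_plus[symmetric] del: ennreal_plus)
  qed
  also have "\<dots> = integral\<^sup>N lborel (\<lambda>y. ennreal (T\<^sub>1 y)) + integral\<^sup>N lborel (\<lambda>y. ennreal (T\<^sub>2 y))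
      + integral\<^sup>N lborel (\<lambda>y. ennreal (T\<^sub>3 y))"
    by (simp add: nn_integral_add)
  also have "integral\<^sup>N lborel (\<lambda>y. ennreal (T\<^sub>1 y))
      = ennreal ((R/2) powr -\<mu>) * emeasure (norm_powr_measure \<beta>) (cball (0::'a) (R/2))"
    unfolding T\<^sub>1_def by (rule nn_integral_norm_powr_translate) simp_all
  also have "integral\<^sup>N lborel (\<lambda>y. ennreal (T\<^sub>2 y))
      = ennreal ((R/2) powr -\<beta>) * emeasure (norm_powr_measure \<mu>) (cball (0::'a) R)"
    unfolding T\<^sub>2_def by (rule nn_integral_norm_powr_translate[where x=0, simplified]) simp_all
  also have "integral\<^sup>N lborel (\<lambda>y. ennreal (T\<^sub>3 y))
      = ennreal (3 powr \<beta>) * emeasure (norm_powr_measure (\<beta> + \<mu>)) (- cball (0::'a) R)"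
    unfolding T\<^sub>3_def by (rule nn_integral_norm_powr_translate[where x=0, simplified]) simp_all
  finally show ?thesis .
qed

lemma region_bounds_sum_eq:
  fixes R \<beta> \<mu> d C\<^sub>1 C\<^sub>2 C\<^sub>3 :: real
  assumes R: "0 < R"
  shows "(R/2) powr -\<mu> * (C\<^sub>1 * (R/2) powr (d - \<beta>)) + (R/2) powr -\<beta> * (C\<^sub>2 * R powr (d - \<mu>))
           + 3 powr \<beta> * (C\<^sub>3 * R powr (d - (\<beta> + \<mu>)))
         = (2 powr (\<beta> + \<mu> - d) * C\<^sub>1 + 2 powr \<beta> * C\<^sub>2 + 3 powr \<beta> * C\<^sub>3) * R powr (d - \<beta> - \<mu>)"
proof -
  have "(R/2) powr -\<mu> * (R/2) powr (d - \<beta>) = (R/2) powr (d - \<beta> - \<mu>)"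
    by (simp add: powr_add[symmetric])
  also have "\<dots> = R powr (d - \<beta> - \<mu>) / 2 powr (d - \<beta> - \<mu>)"
    using R by (simp add: powr_divide)
  moreover have "(2::real) powr (\<beta> + \<mu> - d) = 1 / 2 powr (d - \<beta> - \<mu>)"
    by (subst powr_minus_divide[symmetric]) (simp add: algebra_simps)
  moreover have "(R/2) powr -\<beta> * R powr (d - \<mu>) = 2 powr \<beta> * R powr (d - \<beta> - \<mu>)"
  proof -
    have "(R/2) powr -\<beta> = 2 powr \<beta> * R powr -\<beta>"
      using R by (simp add: powr_divide powr_minus_divide)
    then show ?thesis
      by (simp add: mult.assoc powr_add[symmetric] diff_diff_eq add.commute)
  qed
  ultimately show ?thesis
    by (simp add: algebra_simps)
qed

lemma nn_integral_norm_diff_powr_jbr_powr_le: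
  fixes \<beta> \<mu> :: real
  assumes \<beta>: "0 < \<beta>" "\<beta> < DIM('a)" and \<mu>: "0 < \<mu>" "\<mu> < DIM('a)" and \<beta>\<mu>: "DIM('a) < \<beta> + \<mu>"
  shows "\<exists>K\<ge>0. \<forall>x::'a::euclidean_space.
           (\<integral>\<^sup>+y. ennreal (norm (x - y) powr -\<beta> * jbr y powr -\<mu>) \<partial>lborel)
             \<le> ennreal (K * jbr x powr (real DIM('a) - \<beta> - \<mu>))"
proof -
  obtain C\<^sub>1 where C\<^sub>1: "0 \<le> C\<^sub>1" "\<And>r. 0 < r \<Longrightarrow>
      emeasure (norm_powr_measure \<beta>) (cball (0::'a) r) \<le> ennreal (C\<^sub>1 * r powr (real DIM('a) - \<beta>))"
    using emeasure_norm_powr_measure_cball_le[of \<beta>] \<beta> by auto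
  obtain C\<^sub>2 where C\<^sub>2: "0 \<le> C\<^sub>2" "\<And>r. 0 < r \<Longrightarrow>
      emeasure (norm_powr_measure \<mu>) (cball (0::'a) r) \<le> ennreal (C\<^sub>2 * r powr (real DIM('a) - \<mu>))"
    using emeasure_norm_powr_measure_cball_le[of \<mu>] \<mu> by auto
  obtain C\<^sub>3 where C\<^sub>3: "0 \<le> C\<^sub>3" "\<And>r. 0 < r \<Longrightarrow> emeasure (norm_powr_measure (\<beta> + \<mu>)) (- cball (0::'a) r)
      \<le> ennreal (C\<^sub>3 * r powr (real DIM('a) - (\<beta> + \<mu>)))"
    using emeasure_norm_powr_measure_outside_cball_le[of "\<beta> + \<mu>"] \<beta>\<mu> by auto
  show ?thesis
  proof (intro exI conjI allI)
    fix x :: 'a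
    let ?R = "jbr x"
    have R: "0 < ?R"
      by (rule jbr_pos)
    have "(\<integral>\<^sup>+y. ennreal (norm (x - y) powr -\<beta> * jbr y powr -\<mu>) \<partial>lborel)
      \<le> ennreal ((?R/2) powr -\<mu>) * emeasure (norm_powr_measure \<beta>) (cball (0::'a) (?R/2))
        + ennreal ((?R/2) powr -\<beta>) * emeasure (norm_powr_measure \<mu>) (cball (0::'a) ?R)
        + ennreal (3 powr \<beta>) * emeasure (norm_powr_measure (\<beta> + \<mu>)) (- cball (0::'a) ?R)"
      by (rule nn_integral_norm_diff_powr_jbr_powr_le_regions[OF \<beta>(1) \<mu>(1)])
    also have "\<dots> \<le> ennreal ((?R/2) powr -\<mu>) * ennreal (C\<^sub>1 * (?R/2) powr (real DIM('a) - \<beta>))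
        + ennreal ((?R/2) powr -\<beta>) * ennreal (C\<^sub>2 * ?R powr (real DIM('a) - \<mu>))
        + ennreal (3 powr \<beta>) * ennreal (C\<^sub>3 * ?R powr (real DIM('a) - (\<beta> + \<mu>)))"
      using R by (intro add_mono mult_left_mono C\<^sub>1(2) C\<^sub>2(2) C\<^sub>3(2)) simp_all
    also have "\<dots> = ennreal ((2 powr (\<beta> + \<mu> - real DIM('a)) * C\<^sub>1 + 2 powr \<beta> * C\<^sub>2 + 3 powr \<beta> * C\<^sub>3)
        * ?R powr (real DIM('a) - \<beta> - \<mu>))"
      using C\<^sub>1(1) C\<^sub>2(1) C\<^sub>3(1) region_bounds_sum_eq[OF R, of \<mu> C\<^sub>1 "real DIM('a)" \<beta> C\<^sub>2 C\<^sub>3]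
      by (simp add: ennreal_mult[symmetric] ennreal_plus[symmetric] del: ennreal_plus)
    finally show "(\<integral>\<^sup>+y. ennreal (norm (x - y) powr -\<beta> * jbr y powr -\<mu>) \<partial>lborel)
        \<le> ennreal ((2 powr (\<beta> + \<mu> - real DIM('a)) * C\<^sub>1 + 2 powr \<beta> * C\<^sub>2 + 3 powr \<beta> * C\<^sub>3)
          * jbr x powr (real DIM('a) - \<beta> - \<mu>))" .
  qed (use C\<^sub>1 C\<^sub>2 C\<^sub>3 in simp)
qed

lemma nn_integral_kernel_jbr_weight_le:
  fixes a \<beta> c :: real
  assumes \<beta>: "0 < \<beta>" "\<beta> < DIM('a)" and c: "0 < c" "c < DIM('a) / 2"
    and \<beta>c: "DIM('a) / 2 < \<beta> + c" and a\<beta>c: "DIM('a) \<le> a + \<beta> + c"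
  shows "\<exists>C\<ge>0. \<forall>x::'a::euclidean_space.
           (\<integral>\<^sup>+y. ennreal (jbr x powr -a * norm (x - y) powr -\<beta> * jbr y powr -c * jbr y powr -(DIM('a) / 2)) \<partial>lborel)
             \<le> ennreal (C * jbr x powr -(DIM('a) / 2))"
proof -
  define \<mu> where "\<mu> = c + DIM('a) / 2"
  obtain K where K: "0 \<le> K" "\<And>x::'a. (\<integral>\<^sup>+y. ennreal (norm (x - y) powr -\<beta> * jbr y powr -\<mu>) \<partial>lborel)
      \<le> ennreal (K * jbr x powr (real DIM('a) - \<beta> - \<mu>))"
    using nn_integral_norm_diff_powr_jbr_powr_le[of \<beta> \<mu>, where 'a='a] \<beta> c \<beta>c by (auto simp: \<mu>_def)
  show ?thesis
  proof (intro exI[of _ K] conjI allI)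
    fix x :: 'a
    have "(\<integral>\<^sup>+y. ennreal (jbr x powr -a * norm (x - y) powr -\<beta> * jbr y powr -c * jbr y powr -(DIM('a) / 2)) \<partial>lborel)
        = ennreal (jbr x powr -a) * (\<integral>\<^sup>+y. ennreal (norm (x - y) powr -\<beta> * jbr y powr -\<mu>) \<partial>lborel)"
      by (simp add: \<mu>_def powr_add[symmetric] mult.assoc ennreal_mult nn_integral_cmult)
    also have "\<dots> \<le> ennreal (jbr x powr -a) * ennreal (K * jbr x powr (real DIM('a) - \<beta> - \<mu>))"
      by (intro mult_left_mono K(2)) simp
    also have "\<dots> = ennreal (K * (jbr x powr (real DIM('a) - a - \<beta> - c) * jbr x powr -(DIM('a) / 2)))"
      using K(1) by (simp add: \<mu>_def ennreal_mult[symmetric] powr_add[symmetric] algebra_simps)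
    also have "\<dots> \<le> ennreal (K * jbr x powr -(DIM('a) / 2))"
    proof -
      have "jbr x powr (real DIM('a) - a - \<beta> - c) \<le> jbr x powr 0"
        by (rule powr_mono) (use a\<beta>c one_le_jbr[of x] in auto)
      then have "jbr x powr (real DIM('a) - a - \<beta> - c) \<le> 1"
        using jbr_pos[of x] by simp
      then show ?thesis
        using K(1) by (intro ennreal_leI mult_left_mono) (auto intro: mult_left_le_one_le)
    qed
    finally show "(\<integral>\<^sup>+y. ennreal (jbr x powr -a * norm (x - y) powr -\<beta> * jbr y powr -c * jbr y powr -(DIM('a) / 2)) \<partial>lborel)
        \<le> ennreal (K * jbr x powr -(DIM('a) / 2))" .
  qed (rule K(1))
qed

lemma nn_integral_weighted_Cauchy_Schwarz:
  fixes k w f :: "'a \<Rightarrow> real"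
  assumes [measurable]: "k \<in> borel_measurable M" "w \<in> borel_measurable M" "f \<in> borel_measurable M"
    and k: "\<And>y. 0 \<le> k y" and w: "\<And>y. 0 < w y"
  shows "(\<integral>\<^sup>+y. ennreal (k y * \<bar>f y\<bar>) \<partial>M)\<^sup>2
           \<le> (\<integral>\<^sup>+y. ennreal (k y * w y) \<partial>M) * (\<integral>\<^sup>+y. ennreal (k y / w y * (f y)\<^sup>2) \<partial>M)"
proof -
  have split: "ennreal (k y * \<bar>f y\<bar>) = ennreal (sqrt (k y * w y)) * ennreal (sqrt (k y / w y) * \<bar>f y\<bar>)" for y
  proof -
    have "sqrt (k y * w y) * (sqrt (k y / w y) * \<bar>f y\<bar>) = sqrt ((k y)\<^sup>2) * \<bar>f y\<bar>"
      using w[of y] by (simp add: real_sqrt_mult[symmetric] power2_eq_square)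
    then have "sqrt (k y * w y) * (sqrt (k y / w y) * \<bar>f y\<bar>) = k y * \<bar>f y\<bar>"
      using k[of y] by simp
    then show ?thesis
      using k[of y] w[of y] by (subst ennreal_mult[symmetric]) (auto simp: less_imp_le)
  qed
  have "(\<integral>\<^sup>+y. ennreal (k y * \<bar>f y\<bar>) \<partial>M)\<^sup>2
      \<le> (\<integral>\<^sup>+y. ennreal (sqrt (k y * w y)) ^ 2 \<partial>M) * (\<integral>\<^sup>+y. ennreal (sqrt (k y / w y) * \<bar>f y\<bar>) ^ 2 \<partial>M)"
    unfolding split by (rule Cauchy_Schwarz_nn_integral) measurable
  also have "\<dots> = (\<integral>\<^sup>+y. ennreal (k y * w y) \<partial>M) * (\<integral>\<^sup>+y. ennreal (k y / w y * (f y)\<^sup>2) \<partial>M)"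
    using k w by (intro arg_cong2[where f="(*)"] nn_integral_cong)
      (simp_all add: ennreal_power power_mult_distrib less_imp_le)
  finally show ?thesis .
qed

lemma nn_integral_Schur_test_le:
  fixes k :: "'a::euclidean_space \<Rightarrow> 'a \<Rightarrow> real" and w f :: "'a \<Rightarrow> real"
  assumes [measurable]: "(\<lambda>(x, y). k x y) \<in> borel_measurable (lborel \<Otimes>\<^sub>M lborel)"
    "w \<in> borel_measurable lborel" "f \<in> borel_measurable lborel"
    and k: "\<And>x y. 0 \<le> k x y" and w: "\<And>x. 0 < w x"
    and C\<^sub>1: "0 \<le> C\<^sub>1" "\<And>x. (\<integral>\<^sup>+y. ennreal (k x y * w y) \<partial>lborel) \<le> ennreal (C\<^sub>1 * w x)"
    and C\<^sub>2: "0 \<le> C\<^sub>2" "\<And>y. (\<integral>\<^sup>+x. ennreal (k x y * w x) \<partial>lborel) \<le> ennreal (C\<^sub>2 * w y)"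
  shows "(\<integral>\<^sup>+x. (\<integral>\<^sup>+y. ennreal (k x y * \<bar>f y\<bar>) \<partial>lborel)\<^sup>2 \<partial>lborel)
           \<le> ennreal (C\<^sub>1 * C\<^sub>2) * (\<integral>\<^sup>+y. ennreal ((f y)\<^sup>2) \<partial>lborel)"
proof -
  have w_nonneg: "0 \<le> w x" and w_nonzero: "w x \<noteq> 0" for x
    using w[of x] by simp_all
  have row: "(\<integral>\<^sup>+y. ennreal (k x y * \<bar>f y\<bar>) \<partial>lborel)\<^sup>2
      \<le> ennreal (C\<^sub>1 * w x) * (\<integral>\<^sup>+y. ennreal (k x y / w y * (f y)\<^sup>2) \<partial>lborel)" for x
  proof -
    have "(\<integral>\<^sup>+y. ennreal (k x y * \<bar>f y\<bar>) \<partial>lborel)\<^sup>2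
        \<le> (\<integral>\<^sup>+y. ennreal (k x y * w y) \<partial>lborel) * (\<integral>\<^sup>+y. ennreal (k x y / w y * (f y)\<^sup>2) \<partial>lborel)"
      by (rule nn_integral_weighted_Cauchy_Schwarz[OF _ _ _ k w]) measurable
    also have "\<dots> \<le> ennreal (C\<^sub>1 * w x) * (\<integral>\<^sup>+y. ennreal (k x y / w y * (f y)\<^sup>2) \<partial>lborel)"
      by (intro mult_right_mono C\<^sub>1(2)) simp
    finally show ?thesis .
  qed
  have "(\<integral>\<^sup>+x. (\<integral>\<^sup>+y. ennreal (k x y * \<bar>f y\<bar>) \<partial>lborel)\<^sup>2 \<partial>lborel)
      \<le> (\<integral>\<^sup>+x. ennreal (C\<^sub>1 * w x) * (\<integral>\<^sup>+y. ennreal (k x y / w y * (f y)\<^sup>2) \<partial>lborel) \<partial>lborel)"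
    by (intro nn_integral_mono row)
  also have "\<dots> = (\<integral>\<^sup>+x. (\<integral>\<^sup>+y. ennreal (C\<^sub>1 * (f y)\<^sup>2 / w y) * ennreal (k x y * w x) \<partial>lborel) \<partial>lborel)"
    using C\<^sub>1(1) k w_nonneg
    by (auto simp: nn_integral_cmult[symmetric] ennreal_mult[symmetric] field_simps intro!: nn_integral_cong)
  also have "\<dots> = (\<integral>\<^sup>+y. ennreal (C\<^sub>1 * (f y)\<^sup>2 / w y) * (\<integral>\<^sup>+x. ennreal (k x y * w x) \<partial>lborel) \<partial>lborel)"
    by (subst lborel_pair.Fubini') (simp_all add: nn_integral_cmult)
  also have "\<dots> \<le> (\<integral>\<^sup>+y. ennreal (C\<^sub>1 * (f y)\<^sup>2 / w y) * ennreal (C\<^sub>2 * w y) \<partial>lborel)"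
    by (intro nn_integral_mono mult_left_mono C\<^sub>2(2)) simp
  also have "\<dots> = ennreal (C\<^sub>1 * C\<^sub>2) * (\<integral>\<^sup>+y. ennreal ((f y)\<^sup>2) \<partial>lborel)"
    using C\<^sub>1(1) C\<^sub>2(1) w_nonneg w_nonzero
    by (auto simp: nn_integral_cmult[symmetric] ennreal_mult[symmetric] field_simps intro!: nn_integral_cong)
  finally show ?thesis .
qed

lemma ennreal_abs_int_op_le:
  "ennreal \<bar>int_op k f x\<bar> \<le> (\<integral>\<^sup>+y. ennreal \<bar>k x y * f y\<bar> \<partial>lborel)"
proof (cases "integrable lborel (\<lambda>y. k x y * f y)")
  case True
  then show ?thesis
    using integral_norm_bound_ennreal[OF True] by (simp add: int_op_def)
qed (simp add: int_op_def not_integrable_integral_eq)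

lemma bounded_on_L2I:
  fixes k :: "'a::euclidean_space \<Rightarrow> 'a \<Rightarrow> real" and C :: real
  assumes [measurable]: "(\<lambda>(x, y). k x y) \<in> borel_measurable (lborel \<Otimes>\<^sub>M lborel)"
    and C: "0 \<le> C"
    and bound: "\<And>f. f \<in> borel_measurable lborel \<Longrightarrow>
      (\<integral>\<^sup>+x. (\<integral>\<^sup>+y. ennreal \<bar>k x y * f y\<bar> \<partial>lborel)\<^sup>2 \<partial>lborel) \<le> ennreal C * (\<integral>\<^sup>+y. ennreal ((f y)\<^sup>2) \<partial>lborel)"
  shows "bounded_on_L2 k"
  unfolding bounded_on_L2_def
proof (intro exI[of _ "sqrt C"] allI impI conjI)
  fix f :: "'a \<Rightarrow> real"
  assume "L2 f"
  then have [measurable]: "f \<in> borel_measurable lborel" and f2: "integrable lborel (\<lambda>x. (f x)\<^sup>2)"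
    unfolding L2_def by auto
  define F where "F x = (\<integral>\<^sup>+y. ennreal \<bar>k x y * f y\<bar> \<partial>lborel)" for x
  have [measurable]: "F \<in> borel_measurable lborel"
    unfolding F_def[abs_def] by measurable
  have "(\<integral>\<^sup>+y. ennreal ((f y)\<^sup>2) \<partial>lborel) = ennreal (\<integral>y. (f y)\<^sup>2 \<partial>lborel)"
    by (rule nn_integral_eq_integral[OF f2]) simp
  then have F_bound: "(\<integral>\<^sup>+x. F x ^ 2 \<partial>lborel) \<le> ennreal (C * (\<integral>y. (f y)\<^sup>2 \<partial>lborel))"
    using bound[of f] C by (simp add: F_def ennreal_mult)
  have T_le_F: "ennreal ((int_op k f x)\<^sup>2) \<le> F x ^ 2" for x
  proof -
    have "ennreal \<bar>int_op k f x\<bar> ^ 2 \<le> F x ^ 2"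
      unfolding F_def by (rule power_mono[OF ennreal_abs_int_op_le]) simp
    then show ?thesis
      by (simp add: ennreal_power)
  qed
  have T_bound: "(\<integral>\<^sup>+x. ennreal ((int_op k f x)\<^sup>2) \<partial>lborel) \<le> ennreal (C * (\<integral>y. (f y)\<^sup>2 \<partial>lborel))"
    using nn_integral_mono[OF T_le_F] F_bound by (rule order_trans)
  have "AE x in lborel. F x ^ 2 \<noteq> \<infinity>"
    by (rule nn_integral_PInf_AE, measurable) (use F_bound in \<open>auto simp: top_unique\<close>)
  then show "AE x in lborel. integrable lborel (\<lambda>y. k x y * f y)"
    by eventually_elim (auto simp: F_def power_eq_top_ennreal less_top intro!: integrableI_bounded)
  have [measurable]: "int_op k f \<in> borel_measurable lborel"
    unfolding int_op_def[abs_def] by measurable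
  have "integrable lborel (\<lambda>x. (int_op k f x)\<^sup>2)"
    using le_less_trans[OF T_bound ennreal_less_top] by (intro integrableI_bounded) simp_all
  then show "L2 (int_op k f)"
    unfolding L2_def by simp
  have "(\<integral>x. (int_op k f x)\<^sup>2 \<partial>lborel) = enn2real (\<integral>\<^sup>+x. ennreal ((int_op k f x)\<^sup>2) \<partial>lborel)"
    by (rule integral_eq_nn_integral) auto
  also have "\<dots> \<le> C * (\<integral>y. (f y)\<^sup>2 \<partial>lborel)"
    using enn2real_mono[OF T_bound] C by simp
  finally show "L2_norm (int_op k f) \<le> sqrt C * L2_norm f"
    unfolding L2_norm_def by (simp add: real_sqrt_mult[symmetric])
qed

lemma bounded_on_L2_Schur_test:
  fixes k :: "'a::euclidean_space \<Rightarrow> 'a \<Rightarrow> real" and w :: "'a \<Rightarrow> real"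
  assumes [measurable]: "(\<lambda>(x, y). k x y) \<in> borel_measurable (lborel \<Otimes>\<^sub>M lborel)"
    "w \<in> borel_measurable lborel"
    and k: "\<And>x y. 0 \<le> k x y" and w: "\<And>x. 0 < w x"
    and C\<^sub>1: "0 \<le> C\<^sub>1" "\<And>x. (\<integral>\<^sup>+y. ennreal (k x y * w y) \<partial>lborel) \<le> ennreal (C\<^sub>1 * w x)"
    and C\<^sub>2: "0 \<le> C\<^sub>2" "\<And>y. (\<integral>\<^sup>+x. ennreal (k x y * w x) \<partial>lborel) \<le> ennreal (C\<^sub>2 * w y)"
  shows "bounded_on_L2 k"
proof (rule bounded_on_L2I[of k "C\<^sub>1 * C\<^sub>2"])
  fix f :: "'a \<Rightarrow> real"
  assume [measurable]: "f \<in> borel_measurable lborel"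
  show "(\<integral>\<^sup>+x. (\<integral>\<^sup>+y. ennreal \<bar>k x y * f y\<bar> \<partial>lborel)\<^sup>2 \<partial>lborel)
      \<le> ennreal (C\<^sub>1 * C\<^sub>2) * (\<integral>\<^sup>+y. ennreal ((f y)\<^sup>2) \<partial>lborel)"
    using nn_integral_Schur_test_le[of k w f, OF _ _ _ k w C\<^sub>1 C\<^sub>2] k by (simp add: abs_mult)
qed (use C\<^sub>1 C\<^sub>2 in simp_all)

theorem lemma3p2:
  fixes \<alpha> \<beta> \<gamma> :: real
  assumes "0 < \<alpha>" "\<alpha> < real DIM('a::euclidean_space) / 2"
    and "0 < \<gamma>" "\<gamma> < real DIM('a) / 2"
    and "0 < \<beta>" "\<beta> < real DIM('a)"
    and "real DIM('a) / 2 < \<alpha> + \<beta>" "\<alpha> + \<beta> < real DIM('a)"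
    and "\<alpha> + \<beta> + \<gamma> > real DIM('a)"
  shows "bounded_on_L2 (\<lambda>(x::'a) y. jbr x powr (-\<alpha>) * norm (x - y) powr (-\<beta>) * jbr y powr (-\<gamma>))"
proof -
  obtain C\<^sub>1 where C\<^sub>1: "0 \<le> C\<^sub>1" "\<And>x::'a.
      (\<integral>\<^sup>+y. ennreal (jbr x powr -\<alpha> * norm (x - y) powr -\<beta> * jbr y powr -\<gamma> * jbr y powr -(DIM('a) / 2)) \<partial>lborel)
        \<le> ennreal (C\<^sub>1 * jbr x powr -(DIM('a) / 2))"
    using nn_integral_kernel_jbr_weight_le[of \<beta> \<gamma> \<alpha>, where 'a='a] assms by auto
  obtain C\<^sub>2 where C\<^sub>2: "0 \<le> C\<^sub>2" "\<And>y::'a.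
      (\<integral>\<^sup>+x. ennreal (jbr y powr -\<gamma> * norm (y - x) powr -\<beta> * jbr x powr -\<alpha> * jbr x powr -(DIM('a) / 2)) \<partial>lborel)
        \<le> ennreal (C\<^sub>2 * jbr y powr -(DIM('a) / 2))"
    using nn_integral_kernel_jbr_weight_le[of \<beta> \<alpha> \<gamma>, where 'a='a] assms by auto
  show ?thesis
  proof (rule bounded_on_L2_Schur_test[where w="\<lambda>x. jbr x powr -(DIM('a) / 2)", OF _ _ _ _ C\<^sub>1])
    fix y :: 'a
    show "(\<integral>\<^sup>+x. ennreal (jbr x powr -\<alpha> * norm (x - y) powr -\<beta> * jbr y powr -\<gamma> * jbr x powr -(DIM('a) / 2)) \<partial>lborel)
        \<le> ennreal (C\<^sub>2 * jbr y powr -(DIM('a) / 2))"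
      using C\<^sub>2(2)[of y] by (simp add: norm_minus_commute mult_ac)
  qed (use C\<^sub>2(1) less_imp_neq[OF jbr_pos, symmetric] in auto)
qed

end
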